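(* In the ARRU model described in the context: (a) $Y_n\to\infty$ almost surely; (b) $\min\{N_{1,n},N_{2,n}\}\to\infty$ almost surely.
   Context: ARRU model. Fix $0<a\le b<\infty$, a measurable space $S$, probability measures $\mu_1,\mu_2$ on $S$ and a measurable $u:S\to[a,b]$. On a probability space let $(\xi_{1,n})_{n\ge1}$ be i.i.d. with law $\mu_1$, $(\xi_{2,n})_{n\ge1}$ i.i.d. with law $\mu_2$, and $(U_n)_{n\ge1}$ i.i.d. uniform on $(0,1)$, the three sequences mutually independent. Put $D_{j,n}=u(\xi_{j,n})$ ($j=1,2$). Fix $y_{1,0},y_{2,0}>0$, and set $Y_{1,0}=y_{1,0}$, $Y_{2,0}=y_{2,0}$. Let $\mathcal F_0$ be trivial and $\mathcal F_n=\sigma\big(X_i,\ X_i\xi_{1,i}+(1-X_i)\xi_{2,i}:\ i\le n\big)$. Thresholds $\hat\rho_{1,n},\hat\rho_{2,n}$ ($n\ge0$) are $\mathcal F_n$-measurable random variables with values in $(0,1)$ and $\hat\rho_{1,n}\ge\hat\rho_{2,n}$ a.s. Recursively for $n\ge0$: $Y_n=Y_{1,n}+Y_{2,n}$, $Z_n=Y_{1,n}/Y_n$, $W_{1,n}=\mathbf 1\{Z_n\le\hat\rho_{1,n}\}$, $W_{2,n}=\mathbf 1\{Z_n\ge\hat\rho_{2,n}\}$, $X_{n+1}=\mathbf 1\{U_{n+1}<Z_n\}$, $Y_{1,n+1}=Y_{1,n}+X_{n+1}D_{1,n+1}W_{1,n}$, $Y_{2,n+1}=Y_{2,n}+(1-X_{n+1})D_{2,n+1}W_{2,n}$.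 Let $N_{1,n}=\sum_{i=1}^nX_i$ and $N_{2,n}=\sum_{i=1}^n(1-X_i)$. *)

theory Defs
  imports "HOL-Probability.Probability"
begin

text \<open>For a fixed outcome, the inputs are
  the initial compositions y10 y20, the sequences D1 n = D_{1,n}, D2 n = D_{2,n},
  the uniforms U n, and the thresholds r1 n, r2 n (all indexed as in the paper,
  D, U from n = 1 on, thresholds from n = 0 on).
  arru_Y returns the pair (Y_{1,n}, Y_{2,n}).\<close>

primrec arru_Y :: "real \<Rightarrow> real \<Rightarrow> (nat \<Rightarrow> real) \<Rightarrow> (nat \<Rightarrow> real) \<Rightarrow> (nat \<Rightarrow> real)
    \<Rightarrow> (nat \<Rightarrow> real) \<Rightarrow> (nat \<Rightarrow> real) \<Rightarrow> nat \<Rightarrow> real \<times> real" where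
  "arru_Y y10 y20 D1 D2 U r1 r2 0 = (y10, y20)"
| "arru_Y y10 y20 D1 D2 U r1 r2 (Suc n) =
     (let Y1 = fst (arru_Y y10 y20 D1 D2 U r1 r2 n);
          Y2 = snd (arru_Y y10 y20 D1 D2 U r1 r2 n);
          Z = Y1 / (Y1 + Y2);
          W1 = of_bool (Z \<le> r1 n);
          W2 = of_bool (Z \<ge> r2 n);
          X = of_bool (U (Suc n) < Z)
      in (Y1 + X * D1 (Suc n) * W1, Y2 + (1 - X) * D2 (Suc n) * W2))"

definition arru_Z :: "real \<Rightarrow> real \<Rightarrow> (nat \<Rightarrow> real) \<Rightarrow> (nat \<Rightarrow> real) \<Rightarrow> (nat \<Rightarrow> real)
    \<Rightarrow> (nat \<Rightarrow> real) \<Rightarrow> (nat \<Rightarrow> real) \<Rightarrow> nat \<Rightarrow> real" where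
  "arru_Z y10 y20 D1 D2 U r1 r2 n =
     fst (arru_Y y10 y20 D1 D2 U r1 r2 n) /
       (fst (arru_Y y10 y20 D1 D2 U r1 r2 n) + snd (arru_Y y10 y20 D1 D2 U r1 r2 n))"

text \<open>X_{n+1} = 1{U_{n+1} < Z_n} for n \<ge> 0 (as a boolean); X_0 is not part of the
  model and is set to False by convention (it is never used).\<close>
definition arru_X :: "real \<Rightarrow> real \<Rightarrow> (nat \<Rightarrow> real) \<Rightarrow> (nat \<Rightarrow> real) \<Rightarrow> (nat \<Rightarrow> real)
    \<Rightarrow> (nat \<Rightarrow> real) \<Rightarrow> (nat \<Rightarrow> real) \<Rightarrow> nat \<Rightarrow> bool" where
  "arru_X y10 y20 D1 D2 U r1 r2 n =
     (case n of 0 \<Rightarrow> False | Suc m \<Rightarrow> U (Suc m) < arru_Z y10 y20 D1 D2 U r1 r2 m)"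

datatype arru_idx = Xi1 nat | Xi2 nat | Unif nat

fun arru_idx_num :: "arru_idx \<Rightarrow> nat" where
  "arru_idx_num (Xi1 n) = n" | "arru_idx_num (Xi2 n) = n" | "arru_idx_num (Unif n) = n"

text \<open>Mutual independence of the family (xi_{1,n})_{n\<ge>1}, (xi_{2,n})_{n\<ge>1}, (U_n)_{n\<ge>1}
  (as the independence of the generated sigma-algebras, i.e. indep_vars unfolded).\<close>
definition arru_indep :: "'a measure \<Rightarrow> 's measure \<Rightarrow> (nat \<Rightarrow> 'a \<Rightarrow> 's) \<Rightarrow> (nat \<Rightarrow> 'a \<Rightarrow> 's)
    \<Rightarrow> (nat \<Rightarrow> 'a \<Rightarrow> real) \<Rightarrow> bool" where
  "arru_indep M S xi1 xi2 U =
     prob_space.indep_sets M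
       (\<lambda>i. case i of
              Xi1 n \<Rightarrow> {xi1 n -` A \<inter> space M | A. A \<in> sets S}
            | Xi2 n \<Rightarrow> {xi2 n -` A \<inter> space M | A. A \<in> sets S}
            | Unif n \<Rightarrow> {U n -` A \<inter> space M | A. A \<in> sets borel})
       {i. 1 \<le> arru_idx_num i}"

definition arru_filt :: "'a measure \<Rightarrow> 's measure \<Rightarrow> (nat \<Rightarrow> 'a \<Rightarrow> bool) \<Rightarrow> (nat \<Rightarrow> 'a \<Rightarrow> 's)
    \<Rightarrow> nat \<Rightarrow> 'a measure" where
  "arru_filt M S X Obs n =
     sigma (space M)
       (\<Union>i\<in>{1..n}. {X i -` A \<inter> space M | A. A \<in> sets (count_space (UNIV :: bool set))}
                   \<union> {Obs i -` A \<inter> space M | A. A \<in> sets S})"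

end

theory Submission
  imports Defs "HOL-Analysis.Harmonic_Numbers"
begin

text \<open>
  The urn grows by at most b per step, so Z_n and 1 - Z_n are at least of order 1/n. Since F_n
  is contained in the sigma-algebra of the driving variables up to time n, the uniform U_{n+1}
  is independent of F_n, and conditionally on F_n the draw X_{n+1} is Bernoulli(Z_n). Hence k
  equal draws in a row after time m have probability at most prod_{i<k} (1 - c/(m+i+1)), which
  tends to 0 because the harmonic series diverges; this gives (b).

  For (a): every increment of Y_n is 0 or at least a, so a bounded Y_n is eventually constant.
  When rho_2 <= rho_1, every composition satisfies Z <= rho_1 or Z >= rho_2, so at each step at
  least one of W_1, W_2 equals 1 and the urn grows with probability at least min Z (1 - Z). An
  urn frozen at a composition Z with delta <= Z <= 1 - delta therefore stays frozen for k more
  steps with probability at most (1 - delta)^k.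
\<close>

lemma null_sets_if_emeasure_le_tendsto_zero:
  fixes p :: "nat \<Rightarrow> real"
  assumes "N \<in> sets M" and "\<And>k. emeasure M N \<le> ennreal (p k)" and "p \<longlonglongrightarrow> 0"
  shows "N \<in> null_sets M"
proof -
  have "(\<lambda>k. ennreal (p k)) \<longlonglongrightarrow> 0"
    using tendsto_ennrealI[OF assms(3)] by simp
  then have "emeasure M N \<le> 0"
    using assms(2) by (intro LIMSEQ_le_const) auto
  then show ?thesis using assms(1) by (simp add: null_sets_def)
qed

lemma sum_shifted_harmonic: "(\<Sum>i<k. inverse (real (m + i + 1))) = harm (m + k) - harm m"
  by (induction k) (simp_all add: harm_Suc)

lemma prod_one_minus_le_exp_neg_sum:
  fixes q :: "nat \<Rightarrow> real"
  assumes "\<And>i. q i \<le> 1"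
  shows "(\<Prod>i<k. 1 - q i) \<le> exp (- (\<Sum>i<k. q i))"
proof -
  have "(\<Prod>i<k. 1 - q i) \<le> (\<Prod>i<k. exp (- q i))"
  proof (rule prod_mono)
    fix i show "0 \<le> 1 - q i \<and> 1 - q i \<le> exp (- q i)"
      using assms[of i] exp_ge_add_one_self[of "- q i"] by linarith
  qed
  also have "\<dots> = exp (- (\<Sum>i<k. q i))"
    using exp_sum[of "{..<k}" "\<lambda>i. - q i"] by (simp add: sum_negf)
  finally show ?thesis .
qed

lemma prod_one_minus_harmonic_tendsto_zero:
  fixes c :: real
  assumes "0 < c" "c \<le> 1"
  shows "(\<lambda>k. \<Prod>i<k. 1 - c / real (m + i + 1)) \<longlonglongrightarrow> 0"
proof -
  have "filterlim (\<lambda>k. harm (k + m) :: real) at_top sequentially"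
    by (rule filterlim_compose[OF harm_at_top filterlim_add_const_nat_at_top])
  then have "filterlim (\<lambda>k. c * (- harm m + harm (m + k))) at_top sequentially"
    by (intro filterlim_tendsto_pos_mult_at_top[OF tendsto_const \<open>0 < c\<close>]
        filterlim_tendsto_add_at_top[OF tendsto_const]) (simp add: add.commute)
  moreover have "(\<Sum>i<k. c / real (m + i + 1)) = c * (- harm m + harm (m + k))" for k
    using sum_shifted_harmonic[where m=m and k=k] by (simp add: divide_inverse sum_distrib_left[symmetric])
  ultimately have "filterlim (\<lambda>k. - (\<Sum>i<k. c / real (m + i + 1))) at_bot sequentially"
    unfolding filterlim_uminus_at_bot by simp
  then have exp_lim: "(\<lambda>k. exp (- (\<Sum>i<k. c / real (m + i + 1)))) \<longlonglongrightarrow> 0"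
    by (rule filterlim_compose[OF exp_at_bot])
  have nonneg: "\<forall>\<^sub>F k in sequentially. 0 \<le> (\<Prod>i<k. 1 - c / real (m + i + 1))"
    using assms by (intro always_eventually allI prod_nonneg) auto
  have le_exp: "\<forall>\<^sub>F k in sequentially. (\<Prod>i<k. 1 - c / real (m + i + 1))
                              \<le> exp (- (\<Sum>i<k. c / real (m + i + 1)))"
    using assms by (intro always_eventually allI prod_one_minus_le_exp_neg_sum) auto
  show ?thesis
    by (rule real_tendsto_sandwich[OF nonneg le_exp tendsto_const exp_lim])
qed

lemma filterlim_card_at_top:
  assumes "infinite {i. P i}"
  shows "filterlim (\<lambda>n. card {i\<in>{1..n}. P i}) at_top sequentially"
  unfolding filterlim_at_top eventually_sequentially
proof
  fix K
  have "{i. P i} \<subseteq> insert 0 {i. 1 \<le> i \<and> P i}" by auto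
  then have "infinite {i. 1 \<le> i \<and> P i}"
    using assms finite_subset by auto
  then obtain B where B: "finite B" "card B = K" "B \<subseteq> {i. 1 \<le> i \<and> P i}"
    using infinite_arbitrarily_large by blast
  then obtain N where N: "\<forall>i\<in>B. i \<le> N" using finite_nat_set_iff_bounded_le by blast
  have "K \<le> card {i\<in>{1..n}. P i}" if "N \<le> n" for n
  proof -
    have "B \<subseteq> {i\<in>{1..n}. P i}" using B N that by auto
    then show ?thesis unfolding \<open>card B = K\<close>[symmetric] by (rule card_mono[rotated]) simp
  qed
  then show "\<exists>N. \<forall>n\<ge>N. K \<le> card {i\<in>{1..n}. P i}" by blast
qed

lemma incseq_eventually_const_if_jumps_ge:
  fixes s :: "nat \<Rightarrow> real"
  assumes "incseq s" and "\<not> filterlim s at_top sequentially" and "0 < a"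
    and jump: "\<And>n. s (Suc n) \<noteq> s n \<Longrightarrow> s n + a \<le> s (Suc n)"
  shows "\<exists>m. \<forall>n\<ge>m. s n = s m"
proof -
  obtain K where K: "\<not> (\<forall>\<^sub>F n in sequentially. K \<le> s n)"
    using assms(2) unfolding filterlim_at_top by blast
  have "s n \<le> K" for n
  proof -
    obtain n' where "n \<le> n'" "s n' < K"
      using K by (auto simp: eventually_sequentially not_le)
    moreover have "s n \<le> s n'" using \<open>incseq s\<close> \<open>n \<le> n'\<close> by (rule incseqD)
    ultimately show ?thesis by simp
  qed
  then obtain L where "s \<longlonglongrightarrow> L"
    using incseq_convergent[OF \<open>incseq s\<close>] by blast
  then have "(\<lambda>n. s (Suc n) - s n) \<longlonglongrightarrow> 0"
    using LIMSEQ_Suc tendsto_diff by fastforce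
  then have "\<forall>\<^sub>F n in sequentially. s (Suc n) - s n < a"
    using \<open>0 < a\<close> by (rule order_tendstoD)
  then obtain m where m: "\<And>n. m \<le> n \<Longrightarrow> s (Suc n) = s n"
    using jump unfolding eventually_sequentially by force
  have "s n = s m" if "m \<le> n" for n
    using that by (induction n rule: dec_induct) (simp_all add: m)
  then show ?thesis by blast
qed

lemma Int_stable_vimage_sets: "Int_stable {f -` A \<inter> \<Omega> | A. A \<in> sets N}"
proof (rule Int_stableI)
  fix P Q assume "P \<in> {f -` A \<inter> \<Omega> | A. A \<in> sets N}" "Q \<in> {f -` A \<inter> \<Omega> | A. A \<in> sets N}"
  then obtain A B where "P = f -` A \<inter> \<Omega>" "Q = f -` B \<inter> \<Omega>" "A \<in> sets N" "B \<in> sets N" by auto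
  then show "P \<inter> Q \<in> {f -` A \<inter> \<Omega> | A. A \<in> sets N}"
    by (intro CollectI exI[of _ "A \<inter> B"]) auto
qed

lemma emeasure_uniform_draw_le:
  fixes z :: real
  assumes "0 \<le> z" "z \<le> 1"
  shows "emeasure lborel ({0<..<1} \<inter> {v. (v < z \<longrightarrow> p) \<and> (\<not> v < z \<longrightarrow> q)})
    \<le> ennreal ((if p then z else 0) + (if q then 1 - z else 0))"
proof -
  let ?I1 = "if p then {0..z} else {}" and ?I2 = "if q then {z..1} else {}"
  have "emeasure lborel ({0<..<1} \<inter> {v. (v < z \<longrightarrow> p) \<and> (\<not> v < z \<longrightarrow> q)})
      \<le> emeasure lborel (?I1 \<union> ?I2)"
    by (rule emeasure_mono) auto
  also have "\<dots> \<le> emeasure lborel ?I1 + emeasure lborel ?I2"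
    by (rule emeasure_subadditive) simp_all
  also have "\<dots> = ennreal (if p then z else 0) + ennreal (if q then 1 - z else 0)"
    using assms by auto
  also have "\<dots> = ennreal ((if p then z else 0) + (if q then 1 - z else 0))"
    using assms by (intro ennreal_plus[symmetric]) auto
  finally show ?thesis .
qed

locale arru_urn =
  fixes M :: "'a measure" and S :: "'s measure"
    and u :: "'s \<Rightarrow> real" and a b y10 y20 :: real
    and xi1 xi2 :: "nat \<Rightarrow> 'a \<Rightarrow> 's" and U :: "nat \<Rightarrow> 'a \<Rightarrow> real"
    and rho1 rho2 :: "nat \<Rightarrow> 'a \<Rightarrow> real"
    and X :: "nat \<Rightarrow> 'a \<Rightarrow> bool" and Obs :: "nat \<Rightarrow> 'a \<Rightarrow> 's"
  assumes X_def: "X = (\<lambda>n \<omega>. arru_X y10 y20 (\<lambda>n. u (xi1 n \<omega>)) (\<lambda>n. u (xi2 n \<omega>)) (\<lambda>n. U n \<omega>)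
                     (\<lambda>n. rho1 n \<omega>) (\<lambda>n. rho2 n \<omega>) n)"
    and Obs_def: "Obs = (\<lambda>n \<omega>. if X n \<omega> then xi1 n \<omega> else xi2 n \<omega>)"
    and prob_space_M: "prob_space M"
    and ab: "0 < a" "a \<le> b"
    and u_meas: "u \<in> borel_measurable S"
    and u_range: "\<And>s. s \<in> space S \<Longrightarrow> a \<le> u s \<and> u s \<le> b"
    and xi1_meas: "\<And>n. 1 \<le> n \<Longrightarrow> xi1 n \<in> measurable M S"
    and xi2_meas: "\<And>n. 1 \<le> n \<Longrightarrow> xi2 n \<in> measurable M S"
    and U_meas: "\<And>n. 1 \<le> n \<Longrightarrow> U n \<in> borel_measurable M"
    and U_distr: "\<And>n. 1 \<le> n \<Longrightarrow> distr M lborel (U n) = uniform_measure lborel {0<..<1}"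
    and indep: "arru_indep M S xi1 xi2 U"
    and y0: "0 < y10" "0 < y20"
    and rho_meas: "\<And>n. rho1 n \<in> borel_measurable (arru_filt M S X Obs n)"
                  "\<And>n. rho2 n \<in> borel_measurable (arru_filt M S X Obs n)"
    and rho_order: "\<And>n. AE \<omega> in M. rho2 n \<omega> \<le> rho1 n \<omega>"
begin

sublocale prob_space M by (rule prob_space_M)

definition Y1 :: "nat \<Rightarrow> 'a \<Rightarrow> real" where
  "Y1 n \<omega> = fst (arru_Y y10 y20 (\<lambda>n. u (xi1 n \<omega>)) (\<lambda>n. u (xi2 n \<omega>)) (\<lambda>n. U n \<omega>)
                     (\<lambda>n. rho1 n \<omega>) (\<lambda>n. rho2 n \<omega>) n)"

definition Y2 :: "nat \<Rightarrow> 'a \<Rightarrow> real" where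
  "Y2 n \<omega> = snd (arru_Y y10 y20 (\<lambda>n. u (xi1 n \<omega>)) (\<lambda>n. u (xi2 n \<omega>)) (\<lambda>n. U n \<omega>)
                     (\<lambda>n. rho1 n \<omega>) (\<lambda>n. rho2 n \<omega>) n)"

definition Z :: "nat \<Rightarrow> 'a \<Rightarrow> real" where
  "Z n \<omega> = arru_Z y10 y20 (\<lambda>n. u (xi1 n \<omega>)) (\<lambda>n. u (xi2 n \<omega>)) (\<lambda>n. U n \<omega>)
                     (\<lambda>n. rho1 n \<omega>) (\<lambda>n. rho2 n \<omega>) n"

lemma Z_eq: "Z n \<omega> = Y1 n \<omega> / (Y1 n \<omega> + Y2 n \<omega>)"
  by (simp add: Z_def Y1_def Y2_def arru_Z_def)

lemma X_Suc_iff: "X (Suc n) \<omega> \<longleftrightarrow> U (Suc n) \<omega> < Z n \<omega>"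
  by (simp add: X_def arru_X_def Z_def)

lemma Y1_0: "Y1 0 \<omega> = y10" and Y2_0: "Y2 0 \<omega> = y20"
  by (simp_all add: Y1_def Y2_def)

lemma Y1_Suc: "Y1 (Suc n) \<omega> =
    Y1 n \<omega> + (if X (Suc n) \<omega> \<and> Z n \<omega> \<le> rho1 n \<omega> then u (Obs (Suc n) \<omega>) else 0)"
  unfolding Obs_def X_Suc_iff Z_eq by (simp add: Y1_def Y2_def Let_def)

lemma Y2_Suc: "Y2 (Suc n) \<omega> =
    Y2 n \<omega> + (if \<not> X (Suc n) \<omega> \<and> rho2 n \<omega> \<le> Z n \<omega> then u (Obs (Suc n) \<omega>) else 0)"
  unfolding Obs_def X_Suc_iff Z_eq by (simp add: Y1_def Y2_def Let_def)

lemma Obs_space: "1 \<le> i \<Longrightarrow> \<omega> \<in> space M \<Longrightarrow> Obs i \<omega> \<in> space S"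
  using xi1_meas[of i] xi2_meas[of i] unfolding Obs_def by (auto dest: measurable_space)

lemma u_Obs_bounds: "\<omega> \<in> space M \<Longrightarrow> a \<le> u (Obs (Suc n) \<omega>) \<and> u (Obs (Suc n) \<omega>) \<le> b"
  using u_range Obs_space by simp

lemma Y_bounds:
  assumes "\<omega> \<in> space M"
  shows "y10 \<le> Y1 n \<omega> \<and> y20 \<le> Y2 n \<omega> \<and> Y1 n \<omega> + Y2 n \<omega> \<le> y10 + y20 + b * n"
proof (induction n)
  case (Suc n)
  then show ?case using u_Obs_bounds[OF assms, of n] ab unfolding Y1_Suc Y2_Suc
    by (auto simp: algebra_simps)
qed (simp add: Y1_0 Y2_0)

lemma incseq_Y1:
  assumes "\<omega> \<in> space M" shows "incseq (\<lambda>n. Y1 n \<omega>)"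
proof (rule incseq_SucI)
  fix n show "Y1 n \<omega> \<le> Y1 (Suc n) \<omega>"
    using u_Obs_bounds[OF assms, of n] ab by (simp add: Y1_Suc)
qed

lemma incseq_Y2:
  assumes "\<omega> \<in> space M" shows "incseq (\<lambda>n. Y2 n \<omega>)"
proof (rule incseq_SucI)
  fix n show "Y2 n \<omega> \<le> Y2 (Suc n) \<omega>"
    using u_Obs_bounds[OF assms, of n] ab by (simp add: Y2_Suc)
qed

lemma Z_bounds: "\<omega> \<in> space M \<Longrightarrow> 0 < Z n \<omega> \<and> Z n \<omega> < 1"
  using Y_bounds[of \<omega> n] y0 unfolding Z_eq by (auto simp: field_simps)

lemma Z_lower_bounds:
  assumes "\<omega> \<in> space M"
  shows "y10 / (y10 + y20 + b) / real (n + 1) \<le> Z n \<omega>"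
    and "y20 / (y10 + y20 + b) / real (n + 1) \<le> 1 - Z n \<omega>"
proof -
  have bounds: "y10 \<le> Y1 n \<omega>" "y20 \<le> Y2 n \<omega>" "Y1 n \<omega> + Y2 n \<omega> \<le> y10 + y20 + b * n"
    using Y_bounds[OF assms, of n] by auto
  have "y10 + y20 + b * n \<le> (y10 + y20 + b) * real (n + 1)"
    using y0 ab by (simp add: algebra_simps)
  then have total: "Y1 n \<omega> + Y2 n \<omega> \<le> (y10 + y20 + b) * real (n + 1)"
    using bounds by linarith
  have pos: "0 < Y1 n \<omega> + Y2 n \<omega>" using bounds y0 by linarith
  have "y10 / ((y10 + y20 + b) * real (n + 1)) \<le> Y1 n \<omega> / (Y1 n \<omega> + Y2 n \<omega>)"
    using bounds y0 pos total by (intro frac_le) auto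
  moreover have "y20 / ((y10 + y20 + b) * real (n + 1)) \<le> Y2 n \<omega> / (Y1 n \<omega> + Y2 n \<omega>)"
    using bounds y0 pos total by (intro frac_le) auto
  moreover have "1 - Z n \<omega> = Y2 n \<omega> / (Y1 n \<omega> + Y2 n \<omega>)"
    unfolding Z_eq using pos by (simp add: field_simps)
  ultimately show "y10 / (y10 + y20 + b) / real (n + 1) \<le> Z n \<omega>"
    and "y20 / (y10 + y20 + b) / real (n + 1) \<le> 1 - Z n \<omega>"
    unfolding Z_eq by simp_all
qed

abbreviation F :: "nat \<Rightarrow> 'a measure" where
  "F n \<equiv> arru_filt M S X Obs n"

lemma space_F [simp]: "space (F n) = space M"
  unfolding arru_filt_def by (simp add: space_measure_of_conv)

lemma sets_F: "sets (F n) = sigma_sets (space M)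
    (\<Union>i\<in>{1..n}. {X i -` A \<inter> space M | A. A \<in> sets (count_space (UNIV :: bool set))}
               \<union> {Obs i -` A \<inter> space M | A. A \<in> sets S})"
  unfolding arru_filt_def by (rule sets_measure_of) auto

lemma X_measurable_F:
  assumes "i \<in> {1..n}" shows "X i \<in> measurable (F n) (count_space UNIV)"
proof (rule measurableI)
  fix A :: "bool set"
  show "X i -` A \<inter> space (F n) \<in> sets (F n)"
    unfolding sets_F space_F using assms by (intro sigma_sets.Basic UN_I[of i] UnI1) auto
qed simp

lemma Obs_measurable_F:
  assumes "i \<in> {1..n}" shows "Obs i \<in> measurable (F n) S"
proof (rule measurableI)
  fix A assume "A \<in> sets S"
  then show "Obs i -` A \<inter> space (F n) \<in> sets (F n)"
    unfolding sets_F space_F using assms by (intro sigma_sets.Basic UN_I[of i] UnI2) auto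
qed (use assms Obs_space in auto)

lemma sets_F_subset:
  assumes "space N = space M"
    and "\<And>i. i \<in> {1..n} \<Longrightarrow> X i \<in> measurable N (count_space UNIV)"
    and "\<And>i. i \<in> {1..n} \<Longrightarrow> Obs i \<in> measurable N S"
  shows "sets (F n) \<subseteq> sets N"
  unfolding sets_F assms(1)[symmetric]
  by (rule sets.sigma_sets_subset) (auto intro!: measurable_sets[OF assms(2)] measurable_sets[OF assms(3)])

lemma subalgebra_F:
  assumes "m \<le> n" shows "subalgebra (F n) (F m)"
proof -
  have "sets (F m) \<subseteq> sets (F n)"
    using assms by (intro sets_F_subset) (auto intro: X_measurable_F Obs_measurable_F)
  then show ?thesis by (simp add: subalgebra_def)
qed

lemma measurable_F_mono: "m \<le> n \<Longrightarrow> f \<in> measurable (F m) N \<Longrightarrow> f \<in> measurable (F n) N"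
  using measurable_from_subalg[OF subalgebra_F] by blast

lemma Y_measurable_F: "Y1 n \<in> borel_measurable (F n) \<and> Y2 n \<in> borel_measurable (F n)"
proof (induction n)
  case (Suc n)
  have past: "Y1 n \<in> borel_measurable (F (Suc n))" "Y2 n \<in> borel_measurable (F (Suc n))"
    "rho1 n \<in> borel_measurable (F (Suc n))" "rho2 n \<in> borel_measurable (F (Suc n))"
    using Suc rho_meas by (auto intro: measurable_F_mono[of n])
  have Z: "Z n \<in> borel_measurable (F (Suc n))"
    unfolding Z_eq[abs_def] using past by measurable
  have X: "Measurable.pred (F (Suc n)) (X (Suc n))"
    using X_measurable_F by simp
  have Obs: "(\<lambda>\<omega>. u (Obs (Suc n) \<omega>)) \<in> borel_measurable (F (Suc n))"
    using Obs_measurable_F[of "Suc n"] u_meas by measurable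
  have "Y1 (Suc n) \<in> borel_measurable (F (Suc n))"
    unfolding Y1_Suc[abs_def] using past Z X Obs by measurable
  moreover have "Y2 (Suc n) \<in> borel_measurable (F (Suc n))"
    unfolding Y2_Suc[abs_def] using past Z X Obs by measurable
  ultimately show ?case ..
qed (simp add: Y1_0 Y2_0)

lemma Z_measurable_F: "Z n \<in> borel_measurable (F n)"
proof -
  have "Y1 n \<in> borel_measurable (F n)" "Y2 n \<in> borel_measurable (F n)"
    using Y_measurable_F by auto
  then show ?thesis unfolding Z_eq[abs_def] by measurable
qed

definition driving_events :: "arru_idx \<Rightarrow> 'a set set" where
  "driving_events i = (case i of
      Xi1 n \<Rightarrow> {xi1 n -` A \<inter> space M | A. A \<in> sets S}
    | Xi2 n \<Rightarrow> {xi2 n -` A \<inter> space M | A. A \<in> sets S}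
    | Unif n \<Rightarrow> {U n -` A \<inter> space M | A. A \<in> sets borel})"

definition drivers_upto :: "nat \<Rightarrow> arru_idx set" where
  "drivers_upto n = {i. 1 \<le> arru_idx_num i \<and> arru_idx_num i \<le> n}"

definition driving_sigma :: "nat \<Rightarrow> 'a measure" where
  "driving_sigma n = sigma (space M) (\<Union>i\<in>drivers_upto n. driving_events i)"

lemma driving_events_subset_events: "i \<in> drivers_upto n \<Longrightarrow> driving_events i \<subseteq> events"
  by (cases i) (auto simp: driving_events_def drivers_upto_def
      intro!: measurable_sets[OF xi1_meas] measurable_sets[OF xi2_meas] measurable_sets[OF U_meas])

lemma space_driving_sigma [simp]: "space (driving_sigma n) = space M"
  unfolding driving_sigma_def
  by (rule space_measure_of) (use driving_events_subset_events sets.sets_into_space in blast)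

lemma sets_driving_sigma:
  "sets (driving_sigma n) = sigma_sets (space M) (\<Union>i\<in>drivers_upto n. driving_events i)"
  unfolding driving_sigma_def
  by (rule sets_measure_of) (use driving_events_subset_events sets.sets_into_space in blast)

lemma sets_driving_sigma_subset_events: "sets (driving_sigma n) \<subseteq> events"
  unfolding sets_driving_sigma
  by (rule sets.sigma_sets_subset) (use driving_events_subset_events in blast)

lemma sets_driving_sigma_mono: "m \<le> n \<Longrightarrow> sets (driving_sigma m) \<subseteq> sets (driving_sigma n)"
  unfolding sets_driving_sigma drivers_upto_def by (intro sigma_sets_subseteq UN_mono) auto

lemma measurable_driving_sigma:
  assumes "i \<in> drivers_upto n" and "\<And>A. A \<in> sets N \<Longrightarrow> f -` A \<inter> space M \<in> driving_events i"
    and "f \<in> space M \<rightarrow> space N"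
  shows "f \<in> measurable (driving_sigma n) N"
  using assms by (intro measurableI) (auto simp: sets_driving_sigma)

lemma drivers_measurable_driving_sigma:
  shows "U (Suc n) \<in> borel_measurable (driving_sigma (Suc n))"
    and "xi1 (Suc n) \<in> measurable (driving_sigma (Suc n)) S"
    and "xi2 (Suc n) \<in> measurable (driving_sigma (Suc n)) S"
proof -
  show "U (Suc n) \<in> borel_measurable (driving_sigma (Suc n))"
    using U_meas[of "Suc n"] by (intro measurable_driving_sigma[where i="Unif (Suc n)"])
      (auto simp: drivers_upto_def driving_events_def dest: measurable_space)
  show "xi1 (Suc n) \<in> measurable (driving_sigma (Suc n)) S"
    using xi1_meas[of "Suc n"] by (intro measurable_driving_sigma[where i="Xi1 (Suc n)"])
      (auto simp: drivers_upto_def driving_events_def dest: measurable_space)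
  show "xi2 (Suc n) \<in> measurable (driving_sigma (Suc n)) S"
    using xi2_meas[of "Suc n"] by (intro measurable_driving_sigma[where i="Xi2 (Suc n)"])
      (auto simp: drivers_upto_def driving_events_def dest: measurable_space)
qed

text \<open>This inclusion is what makes U_{n+1} independent of F_n.\<close>

lemma sets_F_subset_driving_sigma: "sets (F n) \<subseteq> sets (driving_sigma n)"
proof (induction n)
  case 0
  show ?case by (rule sets_F_subset) auto
next
  case (Suc n)
  have sub: "subalgebra (driving_sigma (Suc n)) (F n)"
    using Suc sets_driving_sigma_mono[of n "Suc n"] by (auto simp: subalgebra_def)
  have Z: "Z n \<in> borel_measurable (driving_sigma (Suc n))"
    using measurable_from_subalg[OF sub Z_measurable_F] .
  have X: "X (Suc n) \<in> measurable (driving_sigma (Suc n)) (count_space UNIV)"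
    unfolding X_Suc_iff[abs_def] using Z drivers_measurable_driving_sigma(1) by measurable
  then have "{\<omega> \<in> space (driving_sigma (Suc n)). X (Suc n) \<omega>} \<in> sets (driving_sigma (Suc n))"
    by measurable
  then have Obs: "Obs (Suc n) \<in> measurable (driving_sigma (Suc n)) S"
    unfolding Obs_def by (rule measurable_If[OF drivers_measurable_driving_sigma(2,3)])
  show ?case
  proof (rule sets_F_subset)
    fix i assume i: "i \<in> {1..Suc n}"
    show "X i \<in> measurable (driving_sigma (Suc n)) (count_space UNIV)"
    proof (cases "i = Suc n")
      case False
      then show ?thesis using i by (intro measurable_from_subalg[OF sub] X_measurable_F) auto
    qed (use X in simp)
    show "Obs i \<in> measurable (driving_sigma (Suc n)) S"
    proof (cases "i = Suc n")
      case False
      then show ?thesis using i by (intro measurable_from_subalg[OF sub] Obs_measurable_F) auto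
    qed (use Obs in simp)
  qed simp
qed

lemma subalgebra_M_F: "subalgebra M (F n)"
  using sets_F_subset_driving_sigma sets_driving_sigma_subset_events
  by (auto simp: subalgebra_def)

lemma measurable_M_if_F: "f \<in> measurable (F n) N \<Longrightarrow> f \<in> measurable M N"
  using measurable_from_subalg[OF subalgebra_M_F] by blast

lemma X_Suc_measurable_M: "Measurable.pred M (X (Suc n))"
  by (rule measurable_M_if_F[OF X_measurable_F[of "Suc n" "Suc n"]]) simp

lemma measurable_ident_F: "(\<lambda>\<omega>. \<omega>) \<in> measurable M (F n)"
  by (rule measurableI) (use subalgebra_M_F in \<open>auto simp: subalgebra_def\<close>)

lemma Int_stable_driving_events: "Int_stable (driving_events i)"
  by (cases i) (simp_all add: driving_events_def Int_stable_vimage_sets)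

lemma indep_set_F_next_uniform:
  "indep_set (sigma_sets (space M) {(\<lambda>\<omega>. \<omega>) -` A \<inter> space M | A. A \<in> sets (F n)})
     (sigma_sets (space M) {U (Suc n) -` A \<inter> space M | A. A \<in> sets borel})"
proof -
  define I where "I j = (if j then drivers_upto n else {Unif (Suc n)})" for j :: bool
  have "indep_sets driving_events {i. 1 \<le> arru_idx_num i}"
    using indep unfolding arru_indep_def driving_events_def[abs_def] .
  then have "indep_sets driving_events (\<Union>j. I j)"
    by (rule indep_sets_mono_index[rotated]) (auto simp: I_def drivers_upto_def)
  then have indep_blocks: "indep_sets (\<lambda>j. sigma_sets (space M) (\<Union>i\<in>I j. driving_events i)) UNIV"
    by (rule indep_sets_collect_sigma)
       (auto simp: Int_stable_driving_events disjoint_family_on_def I_def drivers_upto_def)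
  have past: "{(\<lambda>\<omega>. \<omega>) -` A \<inter> space M | A. A \<in> sets (F n)}
      \<subseteq> sigma_sets (space M) (\<Union>i\<in>I True. driving_events i)"
  proof
    fix B assume "B \<in> {(\<lambda>\<omega>. \<omega>) -` A \<inter> space M | A. A \<in> sets (F n)}"
    then obtain A where "B = A \<inter> space M" "A \<in> sets (F n)" by auto
    then have "B \<in> sets (driving_sigma n)"
      using sets_F_subset_driving_sigma sets.sets_into_space[of A "F n"] by (auto simp: Int_absorb2)
    then show "B \<in> sigma_sets (space M) (\<Union>i\<in>I True. driving_events i)"
      by (simp add: sets_driving_sigma I_def)
  qed
  have next_draw: "{U (Suc n) -` A \<inter> space M | A. A \<in> sets borel} = (\<Union>i\<in>I False. driving_events i)"
    by (simp add: I_def driving_events_def)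
  show ?thesis
    unfolding indep_set_def
  proof (rule indep_sets_mono_sets[OF indep_blocks])
    fix j :: bool
    show "case_bool (sigma_sets (space M) {(\<lambda>\<omega>. \<omega>) -` A \<inter> space M | A. A \<in> sets (F n)})
        (sigma_sets (space M) {U (Suc n) -` A \<inter> space M | A. A \<in> sets borel}) j
      \<subseteq> sigma_sets (space M) (\<Union>i\<in>I j. driving_events i)"
      using sigma_sets_mono[OF past] next_draw by (cases j) simp_all
  qed
qed

lemma distr_F_next_uniform_pair:
  "distr M (F n) (\<lambda>\<omega>. \<omega>) \<Otimes>\<^sub>M distr M borel (U (Suc n))
     = distr M (F n \<Otimes>\<^sub>M borel) (\<lambda>\<omega>. (\<omega>, U (Suc n) \<omega>))"
  (is "?P \<Otimes>\<^sub>M ?Q = ?J")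
proof -
  have U: "U (Suc n) \<in> borel_measurable M" using U_meas by simp
  interpret P: prob_space ?P by (rule prob_space_distr[OF measurable_ident_F])
  interpret Q: prob_space ?Q by (rule prob_space_distr[OF U])
  interpret PQ: pair_prob_space ?P ?Q ..
  show ?thesis
  proof (rule pair_measure_eqI)
    fix A B assume A: "A \<in> sets ?P" and B: "B \<in> sets ?Q"
    have "emeasure ?J (A \<times> B) = emeasure M (A \<inter> space M \<inter> (U (Suc n) -` B \<inter> space M))"
      using A B measurable_ident_F U by (subst emeasure_distr) (auto intro!: arg_cong[where f="emeasure M"])
    also have "\<dots> = emeasure M (A \<inter> space M) * emeasure M (U (Suc n) -` B \<inter> space M)"
    proof -
      have "A \<inter> space M \<in> sigma_sets (space M) {(\<lambda>\<omega>. \<omega>) -` A \<inter> space M | A. A \<in> sets (F n)}"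
        using A by (intro sigma_sets.Basic) auto
      moreover have "U (Suc n) -` B \<inter> space M
          \<in> sigma_sets (space M) {U (Suc n) -` A \<inter> space M | A. A \<in> sets borel}"
        using B by (intro sigma_sets.Basic) auto
      ultimately show ?thesis
        using indep_setD[OF indep_set_F_next_uniform] by (simp add: emeasure_eq_measure ennreal_mult)
    qed
    also have "\<dots> = emeasure ?P A * emeasure ?Q B"
      using A B measurable_ident_F U by (simp add: emeasure_distr)
    finally show "emeasure ?P A * emeasure ?Q B = emeasure ?J (A \<times> B)" by simp
  qed (auto intro: P.sigma_finite_measure Q.sigma_finite_measure)
qed

lemma emeasure_next_draw:
  assumes T: "T \<in> sets (F n \<Otimes>\<^sub>M borel)"
  shows "emeasure M ((\<lambda>\<omega>. (\<omega>, U (Suc n) \<omega>)) -` T \<inter> space M)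
       = (\<integral>\<^sup>+\<omega>. emeasure lborel ({0<..<1} \<inter> Pair \<omega> -` T) \<partial>distr M (F n) (\<lambda>\<omega>. \<omega>))"
proof -
  let ?U = "U (Suc n)"
  have U: "?U \<in> borel_measurable M" using U_meas by simp
  have joint: "distr M (F n) (\<lambda>\<omega>. \<omega>) \<Otimes>\<^sub>M distr M borel ?U
      = distr M (F n \<Otimes>\<^sub>M borel) (\<lambda>\<omega>. (\<omega>, ?U \<omega>))"
    by (rule distr_F_next_uniform_pair)
  have uniform: "distr M borel ?U = uniform_measure lborel {0<..<1}"
    using U_distr[of "Suc n"] distr_cong[of M M borel lborel ?U ?U] by simp
  interpret draw: sigma_finite_measure "distr M borel ?U"
    using U by (intro prob_space_imp_sigma_finite prob_space_distr)
  have "emeasure M ((\<lambda>\<omega>. (\<omega>, ?U \<omega>)) -` T \<inter> space M)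
      = emeasure (distr M (F n \<Otimes>\<^sub>M borel) (\<lambda>\<omega>. (\<omega>, ?U \<omega>))) T"
    using T measurable_ident_F U by (intro emeasure_distr[symmetric]) auto
  also have "\<dots> = (\<integral>\<^sup>+\<omega>. emeasure (distr M borel ?U) (Pair \<omega> -` T) \<partial>distr M (F n) (\<lambda>\<omega>. \<omega>))"
    unfolding joint[symmetric] by (rule draw.emeasure_pair_measure_alt) (use T in simp)
  also have "\<dots> = (\<integral>\<^sup>+\<omega>. emeasure lborel ({0<..<1} \<inter> Pair \<omega> -` T) \<partial>distr M (F n) (\<lambda>\<omega>. \<omega>))"
    using sets_Pair1[OF T] by (simp add: uniform divide_ennreal_def)
  finally show ?thesis .
qed

text \<open>Conditionally on F_n, X_{n+1} = [U_{n+1} < Z_n] is a Bernoulli(Z_n) draw.\<close>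

lemma emeasure_step_le:
  assumes A: "Measurable.pred (F n) A"
    and P: "Measurable.pred (F n) P" and Q: "Measurable.pred (F n) Q"
    and bound: "\<And>\<omega>. \<omega> \<in> space M \<Longrightarrow> A \<omega> \<Longrightarrow>
                 (if P \<omega> then Z n \<omega> else 0) + (if Q \<omega> then 1 - Z n \<omega> else 0) \<le> c"
    and "0 \<le> c"
  shows "emeasure M {\<omega>\<in>space M. A \<omega> \<and> (X (Suc n) \<omega> \<longrightarrow> P \<omega>) \<and> (\<not> X (Suc n) \<omega> \<longrightarrow> Q \<omega>)}
         \<le> ennreal c * emeasure M {\<omega>\<in>space M. A \<omega>}"
proof -
  define T where "T = {x \<in> space (F n \<Otimes>\<^sub>M borel). A (fst x) \<and>
      (snd x < Z n (fst x) \<longrightarrow> P (fst x)) \<and> (\<not> snd x < Z n (fst x) \<longrightarrow> Q (fst x))}"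
  have T: "T \<in> sets (F n \<Otimes>\<^sub>M borel)"
    unfolding T_def using A P Q Z_measurable_F by measurable
  have A_set: "{\<omega>\<in>space M. A \<omega>} \<in> sets (F n)"
    using A by (simp add: Measurable.pred_def)
  have "{\<omega>\<in>space M. A \<omega> \<and> (X (Suc n) \<omega> \<longrightarrow> P \<omega>) \<and> (\<not> X (Suc n) \<omega> \<longrightarrow> Q \<omega>)}
      = (\<lambda>\<omega>. (\<omega>, U (Suc n) \<omega>)) -` T \<inter> space M"
    by (auto simp: T_def X_Suc_iff space_pair_measure)
  then have "emeasure M {\<omega>\<in>space M. A \<omega> \<and> (X (Suc n) \<omega> \<longrightarrow> P \<omega>) \<and> (\<not> X (Suc n) \<omega> \<longrightarrow> Q \<omega>)}
      = (\<integral>\<^sup>+\<omega>. emeasure lborel ({0<..<1} \<inter> Pair \<omega> -` T) \<partial>distr M (F n) (\<lambda>\<omega>. \<omega>))"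
    using emeasure_next_draw[OF T] by simp
  also have "\<dots> \<le> (\<integral>\<^sup>+\<omega>. ennreal c * indicator {\<omega>\<in>space M. A \<omega>} \<omega> \<partial>distr M (F n) (\<lambda>\<omega>. \<omega>))"
  proof (rule nn_integral_mono)
    fix \<omega> assume "\<omega> \<in> space (distr M (F n) (\<lambda>\<omega>. \<omega>))"
    then have \<omega>: "\<omega> \<in> space M" by simp
    show "emeasure lborel ({0<..<1} \<inter> Pair \<omega> -` T) \<le> ennreal c * indicator {\<omega>\<in>space M. A \<omega>} \<omega>"
    proof (cases "A \<omega>")
      case True
      then have slice: "Pair \<omega> -` T = {v. (v < Z n \<omega> \<longrightarrow> P \<omega>) \<and> (\<not> v < Z n \<omega> \<longrightarrow> Q \<omega>)}"
        using \<omega> by (auto simp: T_def space_pair_measure)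
      have "emeasure lborel ({0<..<1} \<inter> Pair \<omega> -` T)
          \<le> ennreal ((if P \<omega> then Z n \<omega> else 0) + (if Q \<omega> then 1 - Z n \<omega> else 0))"
        unfolding slice using Z_bounds[OF \<omega>, of n] by (intro emeasure_uniform_draw_le) auto
      also have "\<dots> \<le> ennreal c"
        using bound[OF \<omega> True] by (rule ennreal_leI)
      finally show ?thesis using True \<omega> by simp
    qed (simp add: T_def)
  qed
  also have "\<dots> = ennreal c * emeasure (distr M (F n) (\<lambda>\<omega>. \<omega>)) {\<omega>\<in>space M. A \<omega>}"
    using A_set by (intro nn_integral_cmult_indicator) simp
  also have "\<dots> = ennreal c * emeasure M {\<omega>\<in>space M. A \<omega>}"
  proof -
    have "{\<omega>\<in>space M. A \<omega>} \<inter> space M = {\<omega>\<in>space M. A \<omega>}" by blast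
    then show ?thesis using A_set measurable_ident_F by (subst emeasure_distr) auto
  qed
  finally show ?thesis .
qed

lemma emeasure_run_le:
  assumes A: "\<And>k. Measurable.pred (F (m + k)) (A k)"
    and P: "\<And>k. Measurable.pred (F (m + k)) (P k)"
    and Q: "\<And>k. Measurable.pred (F (m + k)) (Q k)"
    and step: "\<And>k \<omega>. \<omega> \<in> space M \<Longrightarrow> A (Suc k) \<omega> \<Longrightarrow>
                 A k \<omega> \<and> (X (Suc (m + k)) \<omega> \<longrightarrow> P k \<omega>) \<and> (\<not> X (Suc (m + k)) \<omega> \<longrightarrow> Q k \<omega>)"
    and bound: "\<And>k \<omega>. \<omega> \<in> space M \<Longrightarrow> A k \<omega> \<Longrightarrow>
                 (if P k \<omega> then Z (m + k) \<omega> else 0) + (if Q k \<omega> then 1 - Z (m + k) \<omega> else 0) \<le> c k"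
    and c: "\<And>k. 0 \<le> c k"
  shows "emeasure M {\<omega>\<in>space M. A k \<omega>} \<le> ennreal (\<Prod>i<k. c i)"
proof (induction k)
  case 0
  show ?case using emeasure_le_1 by simp
next
  case (Suc k)
  have "Measurable.pred M (\<lambda>\<omega>. A k \<omega> \<and> (X (Suc (m + k)) \<omega> \<longrightarrow> P k \<omega>) \<and> (\<not> X (Suc (m + k)) \<omega> \<longrightarrow> Q k \<omega>))"
    using measurable_M_if_F[OF A] measurable_M_if_F[OF P] measurable_M_if_F[OF Q]
      X_Suc_measurable_M[of "m + k"] by measurable
  then have "emeasure M {\<omega>\<in>space M. A (Suc k) \<omega>} \<le>
      emeasure M {\<omega>\<in>space M. A k \<omega> \<and> (X (Suc (m + k)) \<omega> \<longrightarrow> P k \<omega>) \<and> (\<not> X (Suc (m + k)) \<omega> \<longrightarrow> Q k \<omega>)}"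
    using step by (intro emeasure_mono) (auto simp: Measurable.pred_def)
  also have "\<dots> \<le> ennreal (c k) * emeasure M {\<omega>\<in>space M. A k \<omega>}"
    by (rule emeasure_step_le[OF A P Q bound c])
  also have "\<dots> \<le> ennreal (c k) * ennreal (\<Prod>i<k. c i)"
    by (rule mult_left_mono[OF Suc.IH]) simp
  also have "\<dots> = ennreal (\<Prod>i<Suc k. c i)"
    using c by (simp add: ennreal_mult[symmetric] prod_nonneg mult.commute)
  finally show ?case .
qed

lemma null_sets_constant_draws: "{\<omega>\<in>space M. \<forall>k. X (Suc (m + k)) \<omega> = v} \<in> null_sets M"
proof -
  define c where "c = (if v then y20 else y10) / (y10 + y20 + b)"
  have c: "0 < c" "c \<le> 1" using y0 ab by (auto simp: c_def)
  define A where "A k \<omega> = (\<forall>i\<in>{..<k}. X (Suc (m + i)) \<omega> = v)" for k \<omega>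
  have A_le: "emeasure M {\<omega>\<in>space M. A k \<omega>} \<le> ennreal (\<Prod>i<k. 1 - c / real (m + i + 1))" for k
  proof (rule emeasure_run_le[where P="\<lambda>_ _. v" and Q="\<lambda>_ _. \<not> v"])
    show "Measurable.pred (F (m + k)) (A k)" for k
      unfolding A_def using X_measurable_F by (intro pred_intros_finite) auto
    show "(if v then Z (m + k) \<omega> else 0) + (if \<not> v then 1 - Z (m + k) \<omega> else 0)
        \<le> 1 - c / real (m + k + 1)" if "\<omega> \<in> space M" for k \<omega>
      using Z_lower_bounds[OF that, of "m + k"] by (auto simp: c_def)
    show "0 \<le> 1 - c / real (m + k + 1)" for k
      using c by (simp add: field_simps)
  qed (auto simp: A_def less_Suc_eq)
  have A_events: "{\<omega>\<in>space M. A k \<omega>} \<in> events" for k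
    unfolding A_def using X_Suc_measurable_M by measurable
  show ?thesis
  proof (rule null_sets_if_emeasure_le_tendsto_zero[OF _ _ prod_one_minus_harmonic_tendsto_zero[OF c]])
    show "{\<omega>\<in>space M. \<forall>k. X (Suc (m + k)) \<omega> = v} \<in> events"
      using X_Suc_measurable_M by measurable
    show "emeasure M {\<omega>\<in>space M. \<forall>k. X (Suc (m + k)) \<omega> = v}
        \<le> ennreal (\<Prod>i<k. 1 - c / real (m + i + 1))" for k
      using A_events[of k] by (intro order_trans[OF emeasure_mono A_le]) (auto simp: A_def)
  qed
qed

lemma AE_not_eventually_constant_draws: "AE \<omega> in M. \<forall>v m. \<exists>k. X (Suc (m + k)) \<omega> \<noteq> v"
  unfolding AE_all_countable
proof (intro allI)
  fix v m
  show "AE \<omega> in M. \<exists>k. X (Suc (m + k)) \<omega> \<noteq> v"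
    using AE_not_in[OF null_sets_constant_draws[where m=m and v=v]] AE_space by eventually_elim auto
qed

lemma AE_min_draw_counts_tendsto_at_top:
  "AE \<omega> in M. filterlim (\<lambda>n. min (card {i\<in>{1..n}. X i \<omega>}) (card {i\<in>{1..n}. \<not> X i \<omega>}))
                       at_top sequentially"
  using AE_not_eventually_constant_draws
proof eventually_elim
  case (elim \<omega>)
  have "\<exists>n>m. X n \<omega> = v" for m v
  proof -
    obtain k where "X (Suc (m + k)) \<omega> \<noteq> (\<not> v)" using elim by blast
    then show ?thesis by (intro exI[of _ "Suc (m + k)"]) auto
  qed
  then have "infinite {i. X i \<omega> = v}" for v
    unfolding infinite_nat_iff_unbounded by simp
  then have "filterlim (\<lambda>n. card {i\<in>{1..n}. X i \<omega> = v}) at_top sequentially" for v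
    by (rule filterlim_card_at_top)
  from this[of True] this[of False] show ?case
    by (simp add: filterlim_at_top eventually_conj_iff)
qed

lemma Y_total_jump_ge:
  assumes "\<omega> \<in> space M" and "Y1 (Suc n) \<omega> + Y2 (Suc n) \<omega> \<noteq> Y1 n \<omega> + Y2 n \<omega>"
  shows "Y1 n \<omega> + Y2 n \<omega> + a \<le> Y1 (Suc n) \<omega> + Y2 (Suc n) \<omega>"
  using assms u_Obs_bounds[OF assms(1), of n] unfolding Y1_Suc Y2_Suc by (auto split: if_splits)

lemma Y_eventually_const_if_not_at_top:
  assumes "\<omega> \<in> space M" and "\<not> filterlim (\<lambda>n. Y1 n \<omega> + Y2 n \<omega>) at_top sequentially"
  shows "\<exists>m. \<forall>k. Y1 (m + k) \<omega> = Y1 m \<omega> \<and> Y2 (m + k) \<omega> = Y2 m \<omega>"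
proof -
  have inc1: "incseq (\<lambda>n. Y1 n \<omega>)" and inc2: "incseq (\<lambda>n. Y2 n \<omega>)"
    using incseq_Y1 incseq_Y2 assms(1) by auto
  then have "incseq (\<lambda>n. Y1 n \<omega> + Y2 n \<omega>)"
    by (auto simp: incseq_def intro: add_mono)
  then obtain m where m: "\<And>n. m \<le> n \<Longrightarrow> Y1 n \<omega> + Y2 n \<omega> = Y1 m \<omega> + Y2 m \<omega>"
    using incseq_eventually_const_if_jumps_ge[OF _ assms(2) ab(1)] Y_total_jump_ge[OF assms(1)] by blast
  show ?thesis
  proof (intro exI[of _ m] allI)
    fix k
    have "Y1 m \<omega> \<le> Y1 (m + k) \<omega>" "Y2 m \<omega> \<le> Y2 (m + k) \<omega>"
      using inc1 inc2 by (auto simp: incseq_def)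
    then show "Y1 (m + k) \<omega> = Y1 m \<omega> \<and> Y2 (m + k) \<omega> = Y2 m \<omega>"
      using m[of "m + k"] by simp
  qed
qed

definition stalled :: "nat \<Rightarrow> real \<Rightarrow> nat \<Rightarrow> 'a \<Rightarrow> bool" where
  "stalled m \<delta> k \<omega> \<longleftrightarrow> (\<forall>i\<in>{..<k}. rho2 (m + i) \<omega> \<le> rho1 (m + i) \<omega>) \<and>
     Y1 (m + k) \<omega> = Y1 m \<omega> \<and> Y2 (m + k) \<omega> = Y2 m \<omega> \<and> \<delta> \<le> Z m \<omega> \<and> Z m \<omega> \<le> 1 - \<delta>"

lemma stalled_measurable: "Measurable.pred (F (m + k)) (stalled m \<delta> k)"
proof -
  have "Y1 (m + k) \<in> borel_measurable (F (m + k))" "Y2 (m + k) \<in> borel_measurable (F (m + k))"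
    "Y1 m \<in> borel_measurable (F (m + k))" "Y2 m \<in> borel_measurable (F (m + k))"
    "Z m \<in> borel_measurable (F (m + k))"
    using Y_measurable_F Z_measurable_F by (auto intro: measurable_F_mono[of m])
  then have urn: "Measurable.pred (F (m + k)) (\<lambda>\<omega>. Y1 (m + k) \<omega> = Y1 m \<omega> \<and> Y2 (m + k) \<omega> = Y2 m \<omega> \<and>
      \<delta> \<le> Z m \<omega> \<and> Z m \<omega> \<le> 1 - \<delta>)"
    by measurable
  have rho: "Measurable.pred (F (m + k)) (\<lambda>\<omega>. \<forall>i\<in>{..<k}. rho2 (m + i) \<omega> \<le> rho1 (m + i) \<omega>)"
  proof (intro pred_intros_finite)
    fix i assume "i \<in> {..<k}"
    then have "rho1 (m + i) \<in> borel_measurable (F (m + k))" "rho2 (m + i) \<in> borel_measurable (F (m + k))"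
      using rho_meas by (auto intro: measurable_F_mono[of "m + i"])
    then show "Measurable.pred (F (m + k)) (\<lambda>\<omega>. rho2 (m + i) \<omega> \<le> rho1 (m + i) \<omega>)"
      by measurable
  qed simp
  show ?thesis
    unfolding stalled_def[abs_def] by (rule pred_intros_logic(3)[OF rho urn])
qed

lemma stalled_step:
  assumes \<omega>: "\<omega> \<in> space M" and stalled: "stalled m \<delta> (Suc k) \<omega>"
  shows "stalled m \<delta> k \<omega>
    \<and> (X (Suc (m + k)) \<omega> \<longrightarrow> rho2 (m + k) \<omega> \<le> rho1 (m + k) \<omega> \<and> rho1 (m + k) \<omega> < Z (m + k) \<omega>)
    \<and> (\<not> X (Suc (m + k)) \<omega> \<longrightarrow> rho2 (m + k) \<omega> \<le> rho1 (m + k) \<omega> \<and> Z (m + k) \<omega> < rho2 (m + k) \<omega>)"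
proof -
  have "Y1 m \<omega> \<le> Y1 (m + k) \<omega>" "Y1 (m + k) \<omega> \<le> Y1 (Suc (m + k)) \<omega>"
    "Y2 m \<omega> \<le> Y2 (m + k) \<omega>" "Y2 (m + k) \<omega> \<le> Y2 (Suc (m + k)) \<omega>"
    using incseq_Y1[OF \<omega>] incseq_Y2[OF \<omega>] by (auto simp: incseq_def)
  then have no_growth: "Y1 (Suc (m + k)) \<omega> = Y1 (m + k) \<omega>" "Y2 (Suc (m + k)) \<omega> = Y2 (m + k) \<omega>"
    and "stalled m \<delta> k \<omega>"
    using stalled by (auto simp: stalled_def)
  moreover have "rho2 (m + k) \<omega> \<le> rho1 (m + k) \<omega>"
    using stalled by (simp add: stalled_def)
  moreover have "0 < u (Obs (Suc (m + k)) \<omega>)"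
    using u_Obs_bounds[OF \<omega>] ab by (meson less_le_trans)
  ultimately show ?thesis
    unfolding Y1_Suc Y2_Suc by (auto simp: not_le split: if_splits)
qed

text \<open>
  With rho_2 <= rho_1 the two conditions in stalled_step exclude each other, so staying
  stalled for one more step has conditional probability at most max Z (1 - Z) <= 1 - delta.
\<close>

lemma emeasure_stalled_le:
  assumes "0 \<le> \<delta>" "\<delta> \<le> 1"
  shows "emeasure M {\<omega>\<in>space M. stalled m \<delta> k \<omega>} \<le> ennreal ((1 - \<delta>) ^ k)"
proof -
  have thresholds_crossed:
    "Measurable.pred (F (m + k)) (\<lambda>\<omega>. rho2 (m + k) \<omega> \<le> rho1 (m + k) \<omega> \<and> rho1 (m + k) \<omega> < Z (m + k) \<omega>)"
    "Measurable.pred (F (m + k)) (\<lambda>\<omega>. rho2 (m + k) \<omega> \<le> rho1 (m + k) \<omega> \<and> Z (m + k) \<omega> < rho2 (m + k) \<omega>)"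
    for k
  proof -
    have "Z (m + k) \<in> borel_measurable (F (m + k))" "rho1 (m + k) \<in> borel_measurable (F (m + k))"
      "rho2 (m + k) \<in> borel_measurable (F (m + k))"
      using Z_measurable_F rho_meas by auto
    then show "Measurable.pred (F (m + k))
        (\<lambda>\<omega>. rho2 (m + k) \<omega> \<le> rho1 (m + k) \<omega> \<and> rho1 (m + k) \<omega> < Z (m + k) \<omega>)"
      "Measurable.pred (F (m + k))
        (\<lambda>\<omega>. rho2 (m + k) \<omega> \<le> rho1 (m + k) \<omega> \<and> Z (m + k) \<omega> < rho2 (m + k) \<omega>)"
      by measurable measurable
  qed
  have bound: "(if rho2 (m + k) \<omega> \<le> rho1 (m + k) \<omega> \<and> rho1 (m + k) \<omega> < Z (m + k) \<omega> then Z (m + k) \<omega> else 0)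
      + (if rho2 (m + k) \<omega> \<le> rho1 (m + k) \<omega> \<and> Z (m + k) \<omega> < rho2 (m + k) \<omega> then 1 - Z (m + k) \<omega> else 0)
      \<le> 1 - \<delta>" if "stalled m \<delta> k \<omega>" for k \<omega>
  proof -
    have "Z (m + k) \<omega> = Z m \<omega>" using that by (simp add: stalled_def Z_eq)
    then show ?thesis using that assms by (auto simp: stalled_def)
  qed
  have "emeasure M {\<omega>\<in>space M. stalled m \<delta> k \<omega>} \<le> ennreal (\<Prod>i<k. 1 - \<delta>)"
    by (rule emeasure_run_le[OF stalled_measurable thresholds_crossed stalled_step bound]) (use assms in auto)
  then show ?thesis by simp
qed

lemma null_sets_stalled:
  assumes "0 < \<delta>" "\<delta> \<le> 1"
  shows "{\<omega>\<in>space M. \<forall>k. stalled m \<delta> k \<omega>} \<in> null_sets M"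
proof (rule null_sets_if_emeasure_le_tendsto_zero)
  have stalled_M: "Measurable.pred M (stalled m \<delta> k)" for k
    using measurable_M_if_F[OF stalled_measurable] .
  then show "{\<omega>\<in>space M. \<forall>k. stalled m \<delta> k \<omega>} \<in> events" by measurable
  show "emeasure M {\<omega>\<in>space M. \<forall>k. stalled m \<delta> k \<omega>} \<le> ennreal ((1 - \<delta>) ^ k)" for k
    using stalled_M[of k] assms
    by (intro order_trans[OF emeasure_mono emeasure_stalled_le]) (auto simp: Measurable.pred_def)
  show "(\<lambda>k. (1 - \<delta>) ^ k) \<longlonglongrightarrow> 0"
    using assms by (intro LIMSEQ_realpow_zero) auto
qed

lemma AE_not_stalled: "AE \<omega> in M. \<forall>m j. \<not> (\<forall>k. stalled m (inverse (real (Suc j))) k \<omega>)"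
  unfolding AE_all_countable
proof (intro allI)
  fix m j
  have "{\<omega>\<in>space M. \<forall>k. stalled m (inverse (real (Suc j))) k \<omega>} \<in> null_sets M"
    by (rule null_sets_stalled) (auto simp: field_simps)
  from AE_not_in[OF this] AE_space
  show "AE \<omega> in M. \<not> (\<forall>k. stalled m (inverse (real (Suc j))) k \<omega>)"
    by eventually_elim auto
qed

lemma AE_total_tendsto_at_top: "AE \<omega> in M. filterlim (\<lambda>n. Y1 n \<omega> + Y2 n \<omega>) at_top sequentially"
proof -
  have "AE \<omega> in M. \<forall>n. rho2 n \<omega> \<le> rho1 n \<omega>"
    unfolding AE_all_countable using rho_order by blast
  with AE_not_stalled AE_space show ?thesis
  proof eventually_elim
    case (elim \<omega>)
    show ?case
    proof (rule ccontr)
      assume "\<not> ?case"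
      then obtain m where m: "\<And>k. Y1 (m + k) \<omega> = Y1 m \<omega> \<and> Y2 (m + k) \<omega> = Y2 m \<omega>"
        using Y_eventually_const_if_not_at_top[OF elim(2)] by blast
      have "0 < min (Z m \<omega>) (1 - Z m \<omega>)" using Z_bounds[OF elim(2), of m] by simp
      then obtain j where "inverse (real (Suc j)) < min (Z m \<omega>) (1 - Z m \<omega>)"
        using reals_Archimedean by blast
      then have "\<forall>k. stalled m (inverse (real (Suc j))) k \<omega>"
        using m elim(3) by (simp add: stalled_def)
      then show False using elim(1) by blast
    qed
  qed
qed

end

theorem lemma4p2:
  fixes M :: "'a measure" and S :: "'s measure" and mu1 mu2 :: "'s measure"
    and u :: "'s \<Rightarrow> real" and a b y10 y20 :: real
    and xi1 xi2 :: "nat \<Rightarrow> 'a \<Rightarrow> 's" and U :: "nat \<Rightarrow> 'a \<Rightarrow> real"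
    and rho1 rho2 :: "nat \<Rightarrow> 'a \<Rightarrow> real"
  defines "Yp \<equiv> \<lambda>\<omega>. arru_Y y10 y20 (\<lambda>n. u (xi1 n \<omega>)) (\<lambda>n. u (xi2 n \<omega>)) (\<lambda>n. U n \<omega>)
                     (\<lambda>n. rho1 n \<omega>) (\<lambda>n. rho2 n \<omega>)"
  defines "X \<equiv> \<lambda>n \<omega>. arru_X y10 y20 (\<lambda>n. u (xi1 n \<omega>)) (\<lambda>n. u (xi2 n \<omega>)) (\<lambda>n. U n \<omega>)
                     (\<lambda>n. rho1 n \<omega>) (\<lambda>n. rho2 n \<omega>) n"
  defines "Obs \<equiv> \<lambda>n \<omega>. if X n \<omega> then xi1 n \<omega> else xi2 n \<omega>"
  assumes M: "prob_space M"
    and ab: "0 < a" "a \<le> b"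
    and mu1: "prob_space mu1" "sets mu1 = sets S"
    and mu2: "prob_space mu2" "sets mu2 = sets S"
    and u_meas: "u \<in> borel_measurable S"
    and u_range: "\<And>s. s \<in> space S \<Longrightarrow> a \<le> u s \<and> u s \<le> b"
    and xi1_meas: "\<And>n. 1 \<le> n \<Longrightarrow> xi1 n \<in> measurable M S"
    and xi2_meas: "\<And>n. 1 \<le> n \<Longrightarrow> xi2 n \<in> measurable M S"
    and U_meas: "\<And>n. 1 \<le> n \<Longrightarrow> U n \<in> borel_measurable M"
    and xi1_distr: "\<And>n. 1 \<le> n \<Longrightarrow> distr M S (xi1 n) = mu1"
    and xi2_distr: "\<And>n. 1 \<le> n \<Longrightarrow> distr M S (xi2 n) = mu2"
    and U_distr: "\<And>n. 1 \<le> n \<Longrightarrow> distr M lborel (U n) = uniform_measure lborel {0<..<1}"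
    and indep: "arru_indep M S xi1 xi2 U"
    and y0: "0 < y10" "0 < y20"
    and rho_meas: "\<And>n. rho1 n \<in> borel_measurable (arru_filt M S X Obs n)"
                  "\<And>n. rho2 n \<in> borel_measurable (arru_filt M S X Obs n)"
    and rho_range: "\<And>n \<omega>. \<omega> \<in> space M \<Longrightarrow> 0 < rho1 n \<omega> \<and> rho1 n \<omega> < 1"
                   "\<And>n \<omega>. \<omega> \<in> space M \<Longrightarrow> 0 < rho2 n \<omega> \<and> rho2 n \<omega> < 1"
    and rho_order: "\<And>n. AE \<omega> in M. rho2 n \<omega> \<le> rho1 n \<omega>"
  shows "(AE \<omega> in M. filterlim (\<lambda>n. fst (Yp \<omega> n) + snd (Yp \<omega> n)) at_top sequentially)
       \<and> (AE \<omega> in M. filterlim (\<lambda>n. min (card {i\<in>{1..n}. X i \<omega>}) (card {i\<in>{1..n}. \<not> X i \<omega>}))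
                       at_top sequentially)"
proof -
  interpret arru_urn M S u a b y10 y20 xi1 xi2 U rho1 rho2 X Obs
    by (rule arru_urn.intro) (fact | simp add: X_def Obs_def)+
  show ?thesis
    using AE_total_tendsto_at_top AE_min_draw_counts_tendsto_at_top
    by (simp add: Yp_def Y1_def Y2_def)
qed

end
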